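(* Let $\mu>0$, let $0<j_1<j_2$ be the two smallest positive zeros of the Bessel function $J_1$, and let $\rho>(j_2/j_1)^2$. Then there exists $\omega$ with $j_1\sqrt{\mu/\rho}<\omega<j_2\sqrt{\mu/\rho}$ (in particular $j_1^2\mu\le\rho\omega^2\le j_2^2\mu$) such that $$\det\begin{pmatrix} J_1\big(\omega\sqrt{1/\mu}\big) & J_1\big(\omega\sqrt{\rho/\mu}\big)\\ \omega\sqrt{1/\mu}\,J_1'\big(\omega\sqrt{1/\mu}\big) & \omega\sqrt{\rho/\mu}\,J_1'\big(\omega\sqrt{\rho/\mu}\big)\end{pmatrix}=0 .$$ Consequently, any family of such roots $\omega=\omega(\rho)$ satisfies $\rho\,\omega(\rho)^4\to0$ as $\rho\to\infty$.
   Context: $J_1$ denotes the Bessel function of the first kind of order one and $J_1'$ its derivative. *)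

theory Defs
  imports "HOL-Analysis.Analysis"
begin

definition bessel_J1 :: "real \<Rightarrow> real" where
  "bessel_J1 x = (\<Sum>m. (-1) ^ m / (fact m * fact (m + 1)) * (x / 2) ^ (2 * m + 1))"

definition bessel_J1' :: "real \<Rightarrow> real" where
  "bessel_J1' x = deriv bessel_J1 x"

definition bessel_det :: "real \<Rightarrow> real \<Rightarrow> real \<Rightarrow> real" where
  "bessel_det \<mu> \<rho> \<omega> =
     (let a = \<omega> * sqrt (1 / \<mu>); b = \<omega> * sqrt (\<rho> / \<mu>)
      in bessel_J1 a * (b * bessel_J1' b) - bessel_J1 b * (a * bessel_J1' a))"

end

theory Submission
  imports Defs
begin

text \<open>
  With the companion series \<open>J\<^sub>0\<close> one has \<open>J\<^sub>0' = -J\<^sub>1\<close> and \<open>(x J\<^sub>1)' = x J\<^sub>0\<close>, so the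
  energy \<open>x\<^sup>2 (J\<^sub>0\<^sup>2 + J\<^sub>1\<^sup>2)\<close> has derivative \<open>2 x J\<^sub>0\<^sup>2 \<ge> 0\<close>. A positive double zero of \<open>J\<^sub>1\<close>
  would make the energy vanish on the whole interval up to it, so \<open>J\<^sub>1\<close> changes sign at
  \<open>j\<^sub>1\<close> and \<open>j\<^sub>2\<close>, with \<open>J\<^sub>1' (j\<^sub>1) < 0 < J\<^sub>1' (j\<^sub>2)\<close>.

  The two arguments of the determinant differ by the factor \<open>\<surd>\<rho> > j\<^sub>2/j\<^sub>1\<close>. At
  \<open>\<omega> = j\<^sub>k \<surd>(\<mu>/\<rho>)\<close> the larger argument is the zero \<open>j\<^sub>k\<close> and the smaller one lies in
  \<open>(0, j\<^sub>1)\<close>, where \<open>J\<^sub>1 > 0\<close>; so the determinant has the sign of \<open>J\<^sub>1' (j\<^sub>k)\<close> at the two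
  ends, and the intermediate value theorem gives a root. Any such root satisfies
  \<open>\<rho> \<omega>\<^sup>4 \<le> j\<^sub>2\<^sup>4 \<mu>\<^sup>2 / \<rho>\<close>.
\<close>

definition bessel_J1_coeff :: "nat \<Rightarrow> real" where
  "bessel_J1_coeff n =
     (if odd n then (-1) ^ (n div 2) / (fact (n div 2) * fact (n div 2 + 1) * 2 ^ n) else 0)"

definition bessel_J0_coeff :: "nat \<Rightarrow> real" where
  "bessel_J0_coeff n =
     (if even n then (-1) ^ (n div 2) / (fact (n div 2) * fact (n div 2) * 2 ^ n) else 0)"

definition bessel_J0 :: "real \<Rightarrow> real" where
  "bessel_J0 x = (\<Sum>n. bessel_J0_coeff n * x ^ n)"

lemma fact_add_le_pow2_mult_fact: "fact (m + n) \<le> (2::nat) ^ (m + n) * fact m * fact n"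
proof -
  have "fact (m + n) = fact m * fact n * ((m + n) choose m)"
    using binomial_fact_lemma[of m "m + n"] by simp
  also have "\<dots> \<le> fact m * fact n * 2 ^ (m + n)"
    by (intro mult_le_mono2 binomial_le_pow2)
  finally show ?thesis by (simp add: mult_ac)
qed

lemma inverse_fact_mult_pow2_le:
  "1 / (fact m * fact n * 2 ^ (m + n) :: real) \<le> 1 / fact (m + n)"
proof (rule divide_left_mono)
  have "real (fact (m + n)) \<le> real (2 ^ (m + n) * fact m * fact n)"
    by (simp only: of_nat_le_iff fact_add_le_pow2_mult_fact)
  then show "fact (m + n) \<le> (fact m * fact n * 2 ^ (m + n) :: real)"
    by (simp add: mult_ac)
qed auto

lemma abs_bessel_J1_coeff_le: "\<bar>bessel_J1_coeff n\<bar> \<le> 1 / fact n"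
proof (cases "odd n")
  case True
  then obtain m where "n = m + (m + 1)" by (metis oddE add.assoc mult_2)
  then show ?thesis
    using inverse_fact_mult_pow2_le[of m "m + 1"]
    by (simp add: bessel_J1_coeff_def abs_mult power_abs)
qed (simp add: bessel_J1_coeff_def)

lemma abs_bessel_J0_coeff_le: "\<bar>bessel_J0_coeff n\<bar> \<le> 1 / fact n"
proof (cases "even n")
  case True
  then obtain m where "n = m + m" by (metis evenE mult_2)
  then show ?thesis
    using inverse_fact_mult_pow2_le[of m m]
    by (simp add: bessel_J0_coeff_def abs_mult power_abs)
qed (simp add: bessel_J0_coeff_def)

lemma summable_powser_if_coeff_le_inverse_fact:
  assumes "\<And>n. \<bar>c n\<bar> \<le> 1 / fact n"
  shows "summable (\<lambda>n. c n * (x::real) ^ n)"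
proof (rule summable_comparison_test)
  show "summable (\<lambda>n. \<bar>x\<bar> ^ n /\<^sub>R fact n)" by (rule summable_exp_generic)
  have "\<bar>c n\<bar> * \<bar>x\<bar> ^ n \<le> 1 / fact n * \<bar>x\<bar> ^ n" for n
    by (intro mult_right_mono assms) auto
  then show "\<exists>N. \<forall>n\<ge>N. norm (c n * x ^ n) \<le> \<bar>x\<bar> ^ n /\<^sub>R fact n"
    by (simp add: abs_mult power_abs divide_inverse mult.commute)
qed

lemma summable_bessel_J1_powser: "summable (\<lambda>n. bessel_J1_coeff n * x ^ n)"
  by (rule summable_powser_if_coeff_le_inverse_fact[OF abs_bessel_J1_coeff_le])

lemma summable_bessel_J0_powser: "summable (\<lambda>n. bessel_J0_coeff n * x ^ n)"
  by (rule summable_powser_if_coeff_le_inverse_fact[OF abs_bessel_J0_coeff_le])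

lemma bessel_J1_powser: "bessel_J1 x = (\<Sum>n. bessel_J1_coeff n * x ^ n)"
proof -
  have odd_mono: "strict_mono (\<lambda>m::nat. 2 * m + 1)"
    by (rule strict_monoI) simp
  have even_terms: "bessel_J1_coeff n * x ^ n = 0" if "n \<notin> range (\<lambda>m. 2 * m + 1)" for n
    using that by (auto simp: bessel_J1_coeff_def elim!: oddE)
  have "(\<lambda>n. bessel_J1_coeff n * x ^ n) sums (\<Sum>n. bessel_J1_coeff n * x ^ n)"
    using summable_bessel_J1_powser by (rule summable_sums)
  then have "(\<lambda>m. bessel_J1_coeff (2 * m + 1) * x ^ (2 * m + 1))
      sums (\<Sum>n. bessel_J1_coeff n * x ^ n)"
    using sums_mono_reindex[OF odd_mono, of "\<lambda>n. bessel_J1_coeff n * x ^ n"] even_terms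
    by blast
  moreover have "bessel_J1_coeff (2 * m + 1) * x ^ (2 * m + 1)
      = (-1) ^ m / (fact m * fact (m + 1)) * (x / 2) ^ (2 * m + 1)" for m
    by (simp add: bessel_J1_coeff_def power_divide)
  ultimately show ?thesis
    unfolding bessel_J1_def by (simp add: sums_iff)
qed

lemma bessel_J1_has_derivative:
  "(bessel_J1 has_real_derivative (\<Sum>n. diffs bessel_J1_coeff n * x ^ n)) (at x)"
  unfolding bessel_J1_powser[abs_def]
  by (rule termdiffs_strong_converges_everywhere[OF summable_bessel_J1_powser])

lemma bessel_J1'_powser: "bessel_J1' x = (\<Sum>n. diffs bessel_J1_coeff n * x ^ n)"
  unfolding bessel_J1'_def using bessel_J1_has_derivative by (rule DERIV_imp_deriv)

lemma DERIV_bessel_J1: "(bessel_J1 has_real_derivative bessel_J1' x) (at x)"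
  unfolding bessel_J1'_powser by (rule bessel_J1_has_derivative)

lemma isCont_bessel_J1' [continuous_intros]: "isCont bessel_J1' x"
  unfolding bessel_J1'_powser[abs_def]
  by (intro isCont_powser_converges_everywhere termdiff_converges_all summable_bessel_J1_powser)

lemma isCont_bessel_J1 [continuous_intros]: "isCont bessel_J1 x"
  using DERIV_bessel_J1 by (rule DERIV_isCont)

lemma bessel_J1_0 [simp]: "bessel_J1 0 = 0"
  by (simp add: bessel_J1_powser bessel_J1_coeff_def)

lemma bessel_J1'_0: "bessel_J1' 0 = 1 / 2"
  by (simp add: bessel_J1'_powser bessel_J1_coeff_def diffs_def)

lemma diffs_bessel_J0_coeff: "diffs bessel_J0_coeff n = - bessel_J1_coeff n"
proof (cases "odd n")
  case True
  then obtain m where n: "n = 2 * m + 1" by (metis oddE)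
  have cancel: "(2 * q) * - s / ((q * F) * (q * F) * (2 * p)) = - (s / (F * (q * F) * p))"
    if "q > 0" "F > 0" "p > 0" for q F p s :: real
    using that by (simp add: field_simps)
  have "diffs bessel_J0_coeff n
      = (2 * (real m + 1)) * - ((-1) ^ m)
        / (((real m + 1) * fact m) * ((real m + 1) * fact m) * (2 * 2 ^ (2 * m + 1)))"
    using n by (simp add: diffs_def bessel_J0_coeff_def fact_Suc power_add mult_ac add_ac)
  also have "\<dots> = - ((-1) ^ m / (fact m * ((real m + 1) * fact m) * 2 ^ (2 * m + 1)))"
    by (rule cancel) auto
  also have "\<dots> = - bessel_J1_coeff n"
    using n by (simp add: bessel_J1_coeff_def fact_Suc mult_ac)
  finally show ?thesis .
qed (simp add: diffs_def bessel_J0_coeff_def bessel_J1_coeff_def)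

lemma DERIV_bessel_J0: "(bessel_J0 has_real_derivative - bessel_J1 x) (at x)"
proof -
  have "(bessel_J0 has_real_derivative (\<Sum>n. diffs bessel_J0_coeff n * x ^ n)) (at x)"
    unfolding bessel_J0_def[abs_def]
    by (rule termdiffs_strong_converges_everywhere[OF summable_bessel_J0_powser])
  also have "(\<Sum>n. diffs bessel_J0_coeff n * x ^ n) = - bessel_J1 x"
    unfolding diffs_bessel_J0_coeff bessel_J1_powser
    using suminf_minus[OF summable_bessel_J1_powser] by simp
  finally show ?thesis .
qed

lemma bessel_J1_coeff_Suc:
  "(real n + 1) * bessel_J1_coeff n = (if n = 0 then 0 else bessel_J0_coeff (n - 1))"
proof (cases "odd n")
  case True
  then obtain m where n: "n = 2 * m + 1" by (metis oddE)
  have cancel: "(2 * q) * s / (F * (q * F) * (2 * p)) = s / (F * F * p)"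
    if "q > 0" "F > 0" "p > 0" for q F p s :: real
    using that by (simp add: field_simps)
  have "(real n + 1) * bessel_J1_coeff n
      = (2 * (real m + 1)) * (-1) ^ m / (fact m * ((real m + 1) * fact m) * (2 * 2 ^ (2 * m)))"
    using n by (simp add: bessel_J1_coeff_def fact_Suc mult_ac add_ac)
  also have "\<dots> = (-1) ^ m / (fact m * fact m * 2 ^ (2 * m))"
    by (rule cancel) auto
  finally show ?thesis
    using n by (simp add: bessel_J0_coeff_def)
qed (cases n, auto simp: bessel_J0_coeff_def bessel_J1_coeff_def)

lemma bessel_J1_recurrence: "x * bessel_J1' x + bessel_J1 x = x * bessel_J0 x"
proof -
  have "(\<lambda>n. x * (diffs bessel_J1_coeff n * x ^ n)) sums (x * bessel_J1' x)"
    unfolding bessel_J1'_powser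
    by (intro sums_mult summable_sums termdiff_converges_all summable_bessel_J1_powser)
  then have "(\<lambda>n. (\<lambda>n. real n * bessel_J1_coeff n * x ^ n) (Suc n)) sums (x * bessel_J1' x)"
    by (simp add: diffs_def mult_ac)
  then have "(\<lambda>n. real n * bessel_J1_coeff n * x ^ n) sums (x * bessel_J1' x)"
    by (subst (asm) sums_Suc_iff) simp
  then have "(\<lambda>n. real n * bessel_J1_coeff n * x ^ n + bessel_J1_coeff n * x ^ n)
      sums (x * bessel_J1' x + bessel_J1 x)"
    unfolding bessel_J1_powser by (intro sums_add summable_sums summable_bessel_J1_powser)
  moreover have "real n * bessel_J1_coeff n * x ^ n + bessel_J1_coeff n * x ^ n
      = (if n = 0 then 0 else bessel_J0_coeff (n - 1)) * x ^ n" for n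
  proof -
    have "real n * bessel_J1_coeff n * x ^ n + bessel_J1_coeff n * x ^ n
        = ((real n + 1) * bessel_J1_coeff n) * x ^ n"
      by (simp add: algebra_simps)
    then show ?thesis by (simp only: bessel_J1_coeff_Suc)
  qed
  moreover have "(\<lambda>n. x * (bessel_J0_coeff n * x ^ n)) sums (x * bessel_J0 x)"
    unfolding bessel_J0_def by (intro sums_mult summable_sums summable_bessel_J0_powser)
  then have "(\<lambda>n. (\<lambda>n. (if n = 0 then 0 else bessel_J0_coeff (n - 1)) * x ^ n) (Suc n))
      sums (x * bessel_J0 x)"
    by (simp add: mult_ac)
  then have "(\<lambda>n. (if n = 0 then 0 else bessel_J0_coeff (n - 1)) * x ^ n) sums (x * bessel_J0 x)"
    by (subst (asm) sums_Suc_iff) simp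
  ultimately show ?thesis
    using sums_unique2 by simp
qed

lemma bessel_energy_mono:
  assumes "0 \<le> a" "a \<le> b"
  shows "a\<^sup>2 * ((bessel_J0 a)\<^sup>2 + (bessel_J1 a)\<^sup>2) \<le> b\<^sup>2 * ((bessel_J0 b)\<^sup>2 + (bessel_J1 b)\<^sup>2)"
proof (rule DERIV_nonneg_imp_nondecreasing[OF assms(2)])
  fix x assume "a \<le> x"
  have "((\<lambda>x. x\<^sup>2 * ((bessel_J0 x)\<^sup>2 + (bessel_J1 x)\<^sup>2)) has_real_derivative
      2 * x * ((bessel_J0 x)\<^sup>2 + (bessel_J1 x)\<^sup>2)
      + x\<^sup>2 * (2 * bessel_J0 x * - bessel_J1 x + 2 * bessel_J1 x * bessel_J1' x)) (at x)"
    by (auto intro!: derivative_eq_intros DERIV_bessel_J0 DERIV_bessel_J1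
        simp: power2_eq_square algebra_simps)
  moreover have "2 * x * ((bessel_J0 x)\<^sup>2 + (bessel_J1 x)\<^sup>2)
      + x\<^sup>2 * (2 * bessel_J0 x * - bessel_J1 x + 2 * bessel_J1 x * bessel_J1' x)
      = 2 * x * (bessel_J0 x)\<^sup>2
        + 2 * x * bessel_J1 x * (x * bessel_J1' x + bessel_J1 x - x * bessel_J0 x)"
    by (simp add: power2_eq_square algebra_simps)
  ultimately show "\<exists>y. ((\<lambda>x. x\<^sup>2 * ((bessel_J0 x)\<^sup>2 + (bessel_J1 x)\<^sup>2)) has_real_derivative y) (at x)
      \<and> y \<ge> 0"
    using bessel_J1_recurrence[of x] \<open>a \<le> x\<close> assms(1) by auto
qed

lemma bessel_J1_double_zero_imp_vanishing:
  assumes "bessel_J1 j = 0" "bessel_J1' j = 0" "0 < x" "x \<le> j"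
  shows "bessel_J1 x = 0"
proof -
  have "bessel_J0 j = 0"
    using bessel_J1_recurrence[of j] assms by simp
  then have "x\<^sup>2 * ((bessel_J0 x)\<^sup>2 + (bessel_J1 x)\<^sup>2) \<le> 0"
    using bessel_energy_mono[of x j] assms by simp
  then have "(bessel_J0 x)\<^sup>2 + (bessel_J1 x)\<^sup>2 \<le> 0"
    using \<open>0 < x\<close> by (simp add: mult_le_0_iff)
  then show ?thesis
    by (simp add: sum_power2_le_zero_iff)
qed

lemma continuous_on_bessel_J1 [continuous_intros]:
  "continuous_on S f \<Longrightarrow> continuous_on S (\<lambda>x. bessel_J1 (f x))"
  by (rule continuous_on_compose2[of UNIV])
    (auto intro: continuous_at_imp_continuous_on isCont_bessel_J1)

lemma continuous_on_bessel_J1' [continuous_intros]: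
  "continuous_on S f \<Longrightarrow> continuous_on S (\<lambda>x. bessel_J1' (f x))"
  by (rule continuous_on_compose2[of UNIV])
    (auto intro: continuous_at_imp_continuous_on isCont_bessel_J1')

lemma pos_if_no_zero_on_interval:
  fixes f :: "real \<Rightarrow> real"
  assumes "a \<le> b" "continuous_on {a..b} f" "f a > 0" "\<And>x. a \<le> x \<Longrightarrow> x \<le> b \<Longrightarrow> f x \<noteq> 0"
  shows "f b > 0"
proof (rule ccontr)
  assume "\<not> f b > 0"
  then obtain x where "a \<le> x" "x \<le> b" "f x = 0"
    using IVT2'[of f b 0 a] assms(1-3) by force
  with assms(4) show False by blast
qed

lemma DERIV_nonpos_if_ge_on_left:
  assumes "(f has_real_derivative D) (at x)" "d > 0" "\<And>y. x - d < y \<Longrightarrow> y < x \<Longrightarrow> f x \<le> f y"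
  shows "D \<le> 0"
proof (rule ccontr)
  assume "\<not> D \<le> 0"
  then obtain e where "e > 0" and e: "\<And>h. 0 < h \<Longrightarrow> h < e \<Longrightarrow> f (x - h) < f x"
    using DERIV_pos_inc_left[OF assms(1)] by force
  define h where "h = min d e / 2"
  have "0 < h" "h < e" "h < d"
    using \<open>e > 0\<close> \<open>d > 0\<close> by (auto simp: h_def)
  then show False
    using e[of h] assms(3)[of "x - h"] by force
qed

lemma tendsto_mult_pow4_zero_if_le_sqrt:
  fixes w :: "real \<Rightarrow> real"
  assumes "eventually (\<lambda>\<rho>. 0 \<le> w \<rho> \<and> w \<rho> \<le> c * sqrt (\<mu> / \<rho>)) at_top"
  shows "((\<lambda>\<rho>. \<rho> * (w \<rho>) ^ 4) \<longlongrightarrow> 0) at_top"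
proof (rule tendsto_sandwich[of "\<lambda>_. 0" _ _ "\<lambda>\<rho>. c ^ 4 * \<mu>\<^sup>2 / \<rho>"])
  have ev: "eventually (\<lambda>\<rho>. 0 \<le> w \<rho> \<and> w \<rho> \<le> c * sqrt (\<mu> / \<rho>) \<and> \<rho> > 0) at_top"
    using assms eventually_gt_at_top[of 0] by eventually_elim auto
  then show "eventually (\<lambda>\<rho>. 0 \<le> \<rho> * (w \<rho>) ^ 4) at_top"
    by eventually_elim simp
  from ev show "eventually (\<lambda>\<rho>. \<rho> * (w \<rho>) ^ 4 \<le> c ^ 4 * \<mu>\<^sup>2 / \<rho>) at_top"
  proof eventually_elim
    case (elim \<rho>)
    then have "(w \<rho>) ^ 4 \<le> (c * sqrt (\<mu> / \<rho>)) ^ 4"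
      by (intro power_mono) auto
    also have "\<dots> = c ^ 4 * sqrt (((\<mu> / \<rho>)\<^sup>2)\<^sup>2)"
      by (simp add: power_mult_distrib real_sqrt_power flip: power_mult)
    also have "\<dots> = c ^ 4 * (\<mu> / \<rho>)\<^sup>2"
      by (simp only: real_sqrt_abs abs_power2)
    finally show ?case
      using elim by (simp add: power2_eq_square field_simps)
  qed
  show "((\<lambda>\<rho>. c ^ 4 * \<mu>\<^sup>2 / \<rho>) \<longlongrightarrow> 0) at_top"
    by (intro tendsto_divide_0[OF tendsto_const] filterlim_at_top_imp_at_infinity filterlim_ident)
qed simp

lemma bessel_det_at_zero_of_outer:
  assumes "bessel_J1 (\<omega> * sqrt (\<rho> / \<mu>)) = 0"
  shows "bessel_det \<mu> \<rho> \<omega>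
    = bessel_J1 (\<omega> * sqrt (1 / \<mu>)) * (\<omega> * sqrt (\<rho> / \<mu>) * bessel_J1' (\<omega> * sqrt (\<rho> / \<mu>)))"
  using assms by (simp add: bessel_det_def Let_def)

locale bessel_J1_first_zeros =
  fixes j1 j2 :: real
  assumes j1_pos: "0 < j1" and j1_less_j2: "j1 < j2"
    and bessel_J1_j1: "bessel_J1 j1 = 0" and bessel_J1_j2: "bessel_J1 j2 = 0"
    and bessel_J1_nonzero: "\<And>x. 0 < x \<Longrightarrow> x < j2 \<Longrightarrow> x \<noteq> j1 \<Longrightarrow> bessel_J1 x \<noteq> 0"
begin

lemma bessel_J1_pos: "0 < x \<Longrightarrow> x < j1 \<Longrightarrow> bessel_J1 x > 0"
proof -
  assume x: "0 < x" "x < j1"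
  obtain d where "d > 0" and d: "\<And>h. 0 < h \<Longrightarrow> h < d \<Longrightarrow> bessel_J1 (0 + h) > 0"
    using DERIV_pos_inc_right[OF DERIV_bessel_J1[of 0]] bessel_J1'_0 by force
  define h where "h = min x d / 2"
  have h: "0 < h" "h < d" "h \<le> x"
    using x \<open>d > 0\<close> by (auto simp: h_def)
  show "bessel_J1 x > 0"
  proof (rule pos_if_no_zero_on_interval[where f = bessel_J1])
    show "bessel_J1 h > 0" using d[OF h(1,2)] by simp
    show "bessel_J1 y \<noteq> 0" if "h \<le> y" "y \<le> x" for y
      using that h x j1_less_j2 by (intro bessel_J1_nonzero) auto
  qed (use h in \<open>auto intro!: continuous_intros\<close>)
qed

lemma bessel_J1'_j1_neg: "bessel_J1' j1 < 0"
proof -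
  have "bessel_J1' j1 \<noteq> 0"
  proof
    assume "bessel_J1' j1 = 0"
    then have "bessel_J1 (j1 / 2) = 0"
      using bessel_J1_double_zero_imp_vanishing bessel_J1_j1 j1_pos by simp
    with bessel_J1_pos[of "j1 / 2"] j1_pos show False by simp
  qed
  moreover have "bessel_J1' j1 \<le> 0"
    using DERIV_bessel_J1 j1_pos
    by (rule DERIV_nonpos_if_ge_on_left) (simp add: bessel_J1_j1 bessel_J1_pos less_imp_le)
  ultimately show ?thesis by simp
qed

lemma bessel_J1_neg: "j1 < x \<Longrightarrow> x < j2 \<Longrightarrow> bessel_J1 x < 0"
proof -
  assume x: "j1 < x" "x < j2"
  obtain d where "d > 0" and d: "\<And>h. 0 < h \<Longrightarrow> h < d \<Longrightarrow> bessel_J1 (j1 + h) < 0"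
    using DERIV_neg_dec_right[OF DERIV_bessel_J1 bessel_J1'_j1_neg] bessel_J1_j1 by force
  define h where "h = min (x - j1) d / 2"
  have "0 < h" "h < d" "h \<le> (x - j1) / 2"
    using x \<open>d > 0\<close> by (auto simp: h_def)
  then have h: "0 < h" "h < d" "j1 + h \<le> x"
    by simp_all
  have "- bessel_J1 x > 0"
  proof (rule pos_if_no_zero_on_interval[where f = "\<lambda>y. - bessel_J1 y"])
    show "- bessel_J1 (j1 + h) > 0" using d[OF h(1,2)] by simp
    show "- bessel_J1 y \<noteq> 0" if "j1 + h \<le> y" "y \<le> x" for y
      using that h x j1_pos bessel_J1_nonzero[of y] by auto
  qed (use h in \<open>auto intro!: continuous_intros\<close>)
  then show ?thesis by simp
qed

lemma bessel_J1'_j2_pos: "bessel_J1' j2 > 0"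
proof -
  have "bessel_J1' j2 \<noteq> 0"
  proof
    assume "bessel_J1' j2 = 0"
    then have "bessel_J1 ((j1 + j2) / 2) = 0"
      using bessel_J1_double_zero_imp_vanishing bessel_J1_j2 j1_pos j1_less_j2 by simp
    with bessel_J1_neg[of "(j1 + j2) / 2"] j1_less_j2 show False by simp
  qed
  moreover have "- bessel_J1' j2 \<le> 0"
    by (rule DERIV_nonpos_if_ge_on_left[OF DERIV_minus[OF DERIV_bessel_J1], of "j2 - j1"])
      (use j1_less_j2 in \<open>simp_all add: bessel_J1_j2 bessel_J1_neg less_imp_le\<close>)
  ultimately show ?thesis by simp
qed

lemma bessel_det_root_between:
  assumes "\<mu> > 0" "\<rho> > (j2 / j1)\<^sup>2"
  shows "\<exists>\<omega>. j1 * sqrt (\<mu> / \<rho>) < \<omega> \<and> \<omega> < j2 * sqrt (\<mu> / \<rho>) \<and> bessel_det \<mu> \<rho> \<omega> = 0"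
proof -
  define c where "c = sqrt (\<mu> / \<rho>)"
  have "j2 / j1 < sqrt \<rho>"
    using real_less_rsqrt[OF assms(2)] .
  then have j2_less: "j2 < j1 * sqrt \<rho>"
    using j1_pos by (simp add: divide_less_eq mult.commute)
  have "\<rho> > 0"
    using assms(2) zero_le_power2[of "j2 / j1"] by linarith
  then have "c > 0"
    using assms(1) by (simp add: c_def)
  have scale: "j * c * sqrt (\<rho> / \<mu>) = j" "j * c * sqrt (1 / \<mu>) = j / sqrt \<rho>" for j
    using \<open>\<rho> > 0\<close> assms(1)
    by (simp_all add: c_def real_sqrt_divide)
  have inner: "0 < j / sqrt \<rho>" "j / sqrt \<rho> < j1" if "0 < j" "j \<le> j2" for j
    using that j2_less \<open>\<rho> > 0\<close> by (auto simp: divide_less_eq mult.commute)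
  have "bessel_det \<mu> \<rho> (j1 * c) = bessel_J1 (j1 / sqrt \<rho>) * (j1 * bessel_J1' j1)"
    using bessel_det_at_zero_of_outer[of "j1 * c"] by (simp add: scale bessel_J1_j1)
  also have "\<dots> < 0"
    using bessel_J1_pos[OF inner] j1_pos j1_less_j2 bessel_J1'_j1_neg
    by (simp add: mult_pos_neg)
  finally have det_j1: "bessel_det \<mu> \<rho> (j1 * c) < 0" .
  have "bessel_det \<mu> \<rho> (j2 * c) = bessel_J1 (j2 / sqrt \<rho>) * (j2 * bessel_J1' j2)"
    using bessel_det_at_zero_of_outer[of "j2 * c"] by (simp add: scale bessel_J1_j2)
  also have "\<dots> > 0"
    using bessel_J1_pos[OF inner] j1_pos j1_less_j2 bessel_J1'_j2_pos by simp
  finally have det_j2: "bessel_det \<mu> \<rho> (j2 * c) > 0" .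
  have "continuous_on {j1 * c .. j2 * c} (bessel_det \<mu> \<rho>)"
    unfolding bessel_det_def[abs_def] Let_def by (intro continuous_intros)
  moreover have "j1 * c \<le> j2 * c"
    using j1_less_j2 \<open>c > 0\<close> by simp
  ultimately obtain \<omega> where "j1 * c \<le> \<omega>" "\<omega> \<le> j2 * c" "bessel_det \<mu> \<rho> \<omega> = 0"
    using IVT'[of "bessel_det \<mu> \<rho>" "j1 * c" 0 "j2 * c"] det_j1 det_j2 by force
  moreover have "\<omega> \<noteq> j1 * c" "\<omega> \<noteq> j2 * c"
    using calculation det_j1 det_j2 by auto
  ultimately show ?thesis
    unfolding c_def by (intro exI[of _ \<omega>]) auto
qed

end

theorem mainTheorem5:
  fixes \<mu> j1 j2 :: real
  assumes "\<mu> > 0"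
    and "0 < j1" and "j1 < j2"
    and "bessel_J1 j1 = 0" and "bessel_J1 j2 = 0"
    and "\<forall>x. 0 < x \<and> x < j2 \<and> x \<noteq> j1 \<longrightarrow> bessel_J1 x \<noteq> 0"
  shows "(\<forall>\<rho>. \<rho> > (j2 / j1)^2 \<longrightarrow>
            (\<exists>\<omega>. j1 * sqrt (\<mu> / \<rho>) < \<omega> \<and> \<omega> < j2 * sqrt (\<mu> / \<rho>)
                 \<and> bessel_det \<mu> \<rho> \<omega> = 0))
       \<and> (\<forall>w :: real \<Rightarrow> real.
            (\<forall>\<rho>. \<rho> > (j2 / j1)^2 \<longrightarrow>
               j1 * sqrt (\<mu> / \<rho>) < w \<rho> \<and> w \<rho> < j2 * sqrt (\<mu> / \<rho>)
               \<and> bessel_det \<mu> \<rho> (w \<rho>) = 0)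
            \<longrightarrow> ((\<lambda>\<rho>. \<rho> * (w \<rho>)^4) \<longlongrightarrow> 0) at_top)"
proof (intro conjI allI impI)
  interpret bessel_J1_first_zeros j1 j2
    using assms by unfold_locales auto
  show "\<exists>\<omega>. j1 * sqrt (\<mu> / \<rho>) < \<omega> \<and> \<omega> < j2 * sqrt (\<mu> / \<rho>) \<and> bessel_det \<mu> \<rho> \<omega> = 0"
    if "\<rho> > (j2 / j1)^2" for \<rho>
    using bessel_det_root_between[OF assms(1) that] .
next
  fix w :: "real \<Rightarrow> real"
  assume roots: "\<forall>\<rho>. \<rho> > (j2 / j1)^2 \<longrightarrow>
    j1 * sqrt (\<mu> / \<rho>) < w \<rho> \<and> w \<rho> < j2 * sqrt (\<mu> / \<rho>) \<and> bessel_det \<mu> \<rho> (w \<rho>) = 0"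
  have "eventually (\<lambda>\<rho>. 0 \<le> w \<rho> \<and> w \<rho> \<le> j2 * sqrt (\<mu> / \<rho>)) at_top"
    using eventually_gt_at_top[of "(j2 / j1)^2"]
  proof eventually_elim
    case (elim \<rho>)
    then have "\<rho> > 0"
      using zero_le_power2[of "j2 / j1"] by linarith
    then have "0 < j1 * sqrt (\<mu> / \<rho>)"
      using assms(1,2) by simp
    with roots elim show ?case
      by (meson less_eq_real_def order.strict_trans)
  qed
  then show "((\<lambda>\<rho>. \<rho> * (w \<rho>)^4) \<longlongrightarrow> 0) at_top"
    by (rule tendsto_mult_pow4_zero_if_le_sqrt)
qed

end
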